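(* Let $R\in\mathbb{C}[z]$ be a nonzero polynomial and $m\ge0$ an integer. For $a$ in the annulus $|q|^2<|a|<1$ let $M(a)$ be the $(m+1)\times(m+1)$ matrix with entries $M(a)_{ij}=\oint_{|z|=1}R(z)\,w_a(z)\,z^{i+j}\,dz$, $0\le i,j\le m$. Then there is a nonzero Laurent polynomial $D\in\mathbb{C}[a,a^{-1}]$ such that $\det M(a)=D(a)$ for all $a$ with $|q|^2<|a|<1$.
   Context: Let $q\in\mathbb{C}$ with $0<|q|<1$. For $a\in\mathbb{C}$ with $|q|^2<|a|<1$ put $b=q^2a^{-1}$, and let $w_a$ be a meromorphic function on $\mathbb{C}\setminus\{0\}$ with $w_a(q^2x)=w_a(x)$ whose only poles are simple poles at the points $q^{2k}a$ with residue $q^{2k}a$ and at the points $q^{2k}b$ with residue $-q^{2k}b$ ($k\in\mathbb{Z}$); such $w_a$ exists and is unique up to an additive constant (the entries of $M(a)$ do not depend on this constant). *)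

theory Defs
  imports "HOL-Complex_Analysis.Complex_Analysis" "Jordan_Normal_Form.Determinant"
begin

definition w_spec :: "complex \<Rightarrow> complex \<Rightarrow> (complex \<Rightarrow> complex) \<Rightarrow> bool" where
  "w_spec q a w \<longleftrightarrow>
     (let b = q\<^sup>2 / a;
          PA = {q powi (2*k) * a | k::int. True};
          PB = {q powi (2*k) * b | k::int. True}
      in w meromorphic_on (- {0}) \<and>
         w holomorphic_on (- {0} - (PA \<union> PB)) \<and>
         (\<forall>x \<in> - {0} - (PA \<union> PB). w (q\<^sup>2 * x) = w x) \<and>
         (\<forall>k::int. is_pole w (q powi (2*k) * a) \<and> zorder w (q powi (2*k) * a) = -1 \<and>
                   residue w (q powi (2*k) * a) = q powi (2*k) * a) \<and>
         (\<forall>k::int. is_pole w (q powi (2*k) * b) \<and> zorder w (q powi (2*k) * b) = -1 \<and>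
                   residue w (q powi (2*k) * b) = - (q powi (2*k) * b)))"

definition moment_matrix :: "complex poly \<Rightarrow> (complex \<Rightarrow> complex) \<Rightarrow> nat \<Rightarrow> complex mat" where
  "moment_matrix R w m = mat (Suc m) (Suc m)
     (\<lambda>(i, j). contour_integral (circlepath 0 1) (\<lambda>z. poly R z * w z * z ^ (i + j)))"

end

theory Submission
  imports Defs
begin

(* Because w is invariant under z \<mapsto> q^2 z, the integral of w(z) z^n over the circle of
   radius |q|^2 is q^(2(n+1)) times the integral over the unit circle.  On an annulus containing
   both circles, w has only the simple poles a and b = q^2/a; once their principal parts are
   subtracted, Cauchy's theorem shows that the two integrals differ by 2 pi i (a^(n+1) - b^(n+1)).
   Hence every moment is a Laurent polynomial in a, and det M(a) = a^S D(1/a) for a polynomial D.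
   Its constant term is, up to a nonzero factor, the Cauchy-type determinant
   det (1 / (1 - q^(2i) q^(2(j+d+1)))), which does not vanish. *)

lemma det_mat_mult_row_col:
  fixes f g :: "nat \<Rightarrow> 'a :: comm_ring_1"
  shows "det (mat n n (\<lambda>(i, j). f i * g j * h i j)) =
         (\<Prod>i<n. f i * g i) * det (mat n n (\<lambda>(i, j). h i j))"
proof -
  have "det (mat n n (\<lambda>(i, j). f i * g j * h i j)) =
        (\<Sum>p\<in>{p. p permutes {0..<n}}. signof p * (\<Prod>i=0..<n. f i * g (p i) * h i (p i)))"
    by (subst det_def'[of _ n]) (auto intro!: sum.cong prod.cong simp: permutes_in_image)
  also have "\<dots> = (\<Sum>p\<in>{p. p permutes {0..<n}}.
                    (\<Prod>i<n. f i * g i) * (signof p * (\<Prod>i=0..<n. h i (p i))))"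
  proof (rule sum.cong[OF refl])
    fix p assume "p \<in> {p. p permutes {0..<n}}"
    then have "(\<Prod>i=0..<n. g (p i)) = (\<Prod>i=0..<n. g i)"
      using prod.permute[of p "{0..<n}" g] by (simp add: o_def)
    then show "signof p * (\<Prod>i=0..<n. f i * g (p i) * h i (p i)) =
               (\<Prod>i<n. f i * g i) * (signof p * (\<Prod>i=0..<n. h i (p i)))"
      by (simp add: prod.distrib atLeast0LessThan mult_ac)
  qed
  also have "\<dots> = (\<Prod>i<n. f i * g i) * det (mat n n (\<lambda>(i, j). h i j))"
    by (subst det_def'[of _ n]) (auto simp: sum_distrib_left permutes_in_image intro!: sum.cong prod.cong)
  finally show ?thesis .
qed

lemma det_map_mat_poly:
  fixes A :: "'a :: comm_ring_1 poly mat"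
  shows "det (map_mat (\<lambda>p. poly p x) A) = poly (det A) x"
proof -
  interpret comm_ring_hom "\<lambda>p :: 'a poly. poly p x"
    by unfold_locales auto
  show ?thesis
    by (rule hom_det)
qed

lemma degree_prod_linear_le:
  "degree (\<Prod>k\<in>A. [:1, c k:]) \<le> card A"
proof (cases "finite A")
  case True
  have "degree (\<Prod>k\<in>A. [:1, c k:]) \<le> (\<Sum>k\<in>A. degree [:1, c k:])"
    using degree_prod_sum_le[OF True, of "\<lambda>k. [:1, c k:]"] by (simp add: o_def)
  also have "\<dots> \<le> (\<Sum>k\<in>A. 1)"
    by (intro sum_mono) simp
  finally show ?thesis
    by simp
qed simp

lemma cauchy_combination_numerator_eq_zero:
  fixes x y v :: "nat \<Rightarrow> 'a :: field"
  assumes x: "inj_on x {..<n}"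
    and xy: "\<And>i j. i < n \<Longrightarrow> j < n \<Longrightarrow> x i * y j \<noteq> 1"
    and comb: "\<And>i. i < n \<Longrightarrow> (\<Sum>j<n. v j / (1 - x i * y j)) = 0"
  shows "(\<Sum>j<n. Polynomial.smult (v j) (\<Prod>k\<in>{..<n} - {j}. [:1, - y k:])) = 0"
    (is "?N = 0")
proof (cases "n = 0")
  case False
  have "degree ?N \<le> n - 1"
  proof (intro degree_sum_le order_trans[OF degree_smult_le])
    fix j assume "j \<in> {..<n}"
    then show "degree (\<Prod>k\<in>{..<n} - {j}. [:1, - y k:]) \<le> n - 1"
      using degree_prod_linear_le[of "\<lambda>k. - y k" "{..<n} - {j}"] by simp
  qed simp
  moreover have "poly ?N (x i) = 0" if i: "i < n" for i
  proof -
    have "v j * (\<Prod>k\<in>{..<n} - {j}. 1 - y k * x i) =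
          (\<Prod>k<n. 1 - x i * y k) * (v j / (1 - x i * y j))" if j: "j < n" for j
    proof -
      have "(\<Prod>k<n. 1 - x i * y k) = (1 - x i * y j) * (\<Prod>k\<in>{..<n} - {j}. 1 - y k * x i)"
        using j by (simp add: prod.remove[of "{..<n}" j] mult.commute)
      moreover have "1 - x i * y j \<noteq> 0"
        using xy[OF i j] by simp
      ultimately show ?thesis
        by simp
    qed
    then have "poly ?N (x i) = (\<Prod>k<n. 1 - x i * y k) * (\<Sum>j<n. v j / (1 - x i * y j))"
      unfolding sum_distrib_left by (auto simp: poly_sum poly_prod algebra_simps intro!: sum.cong)
    then show ?thesis
      by (simp add: comb i)
  qed
  ultimately show ?thesis
    using False card_image[OF x] by (intro poly_eqI_degree[of "x ` {..<n}"]) auto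
qed simp

lemma cauchy_combination_eq_zero_imp_zero:
  fixes x y v :: "nat \<Rightarrow> 'a :: field"
  assumes x: "inj_on x {..<n}" and y: "inj_on y {..<n}" "\<And>j. j < n \<Longrightarrow> y j \<noteq> 0"
    and xy: "\<And>i j. i < n \<Longrightarrow> j < n \<Longrightarrow> x i * y j \<noteq> 1"
    and comb: "\<And>i. i < n \<Longrightarrow> (\<Sum>j<n. v j / (1 - x i * y j)) = 0"
    and j: "j < n"
  shows "v j = 0"
proof -
  have vanish: "(\<Prod>k\<in>{..<n} - {i}. 1 - y k * (1 / y j)) = 0" if "i \<in> {..<n} - {j}" for i
    using that j y(2)[OF j] by (intro prod_zero bexI[of _ j]) auto
  have "0 = poly (\<Sum>j<n. Polynomial.smult (v j) (\<Prod>k\<in>{..<n} - {j}. [:1, - y k:])) (1 / y j)"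
    by (simp add: cauchy_combination_numerator_eq_zero[OF x xy comb])
  also have "\<dots> = v j * (\<Prod>k\<in>{..<n} - {j}. 1 - y k * (1 / y j)) +
                  (\<Sum>i\<in>{..<n} - {j}. v i * (\<Prod>k\<in>{..<n} - {i}. 1 - y k * (1 / y j)))"
    using j by (simp add: poly_sum poly_prod algebra_simps sum.remove[of "{..<n}" j])
  also have "(\<Sum>i\<in>{..<n} - {j}. v i * (\<Prod>k\<in>{..<n} - {i}. 1 - y k * (1 / y j))) = 0"
    using vanish by (intro sum.neutral) simp
  finally have "v j * (\<Prod>k\<in>{..<n} - {j}. 1 - y k * (1 / y j)) = 0"
    by simp
  moreover have "1 - y k * (1 / y j) \<noteq> 0" if "k \<in> {..<n} - {j}" for k
    using that j y inj_onD[OF y(1), of k j] by (auto simp: field_simps)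
  ultimately show ?thesis
    using y(2)[OF j] by auto
qed

lemma det_cauchy_matrix_nonzero:
  fixes x y :: "nat \<Rightarrow> 'a :: field"
  assumes "inj_on x {..<n}" "inj_on y {..<n}" "\<And>j. j < n \<Longrightarrow> y j \<noteq> 0"
    and "\<And>i j. i < n \<Longrightarrow> j < n \<Longrightarrow> x i * y j \<noteq> 1"
  shows "det (mat n n (\<lambda>(i, j). 1 / (1 - x i * y j))) \<noteq> 0"
proof
  assume "det (mat n n (\<lambda>(i, j). 1 / (1 - x i * y j))) = 0"
  then obtain v where v: "v \<in> carrier_vec n" "v \<noteq> 0\<^sub>v n"
    "mat n n (\<lambda>(i, j). 1 / (1 - x i * y j)) *\<^sub>v v = 0\<^sub>v n"
    using det_0_iff_vec_prod_zero_field[OF mat_carrier] by blast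
  have "(\<Sum>j<n. vec_index v j / (1 - x i * y j)) = 0" if "i < n" for i
    using arg_cong[OF v(3), of "\<lambda>u. vec_index u i"] that v(1)
    by (simp add: scalar_prod_def atLeast0LessThan)
  then have "vec_index v j = 0" if "j < n" for j
    using cauchy_combination_eq_zero_imp_zero[OF assms] that by blast
  then have "v = 0\<^sub>v n"
    using v(1) by (intro eq_vecI) auto
  with v(2) show False ..
qed

lemma power_mult_poly_inverse_laurent:
  fixes D :: "'a :: field poly"
  assumes "D \<noteq> 0"
  shows "\<exists>N::nat. \<exists>c::int \<Rightarrow> 'a. (\<exists>k\<in>{- int N..int N}. c k \<noteq> 0) \<and>
           (\<forall>a. a \<noteq> 0 \<longrightarrow> a ^ S * poly D (1 / a) = (\<Sum>k = - int N..int N. c k * a powi k))"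
proof (intro exI conjI allI impI)
  define N where "N = S + degree D"
  define c where "c k = (if k \<le> int S then coeff D (nat (int S - k)) else 0)" for k :: int
  define e where "e i = int S - int i" for i :: nat
  show "\<exists>k\<in>{- int N..int N}. c k \<noteq> 0"
    using assms by (intro bexI[of _ "e (degree D)"]) (auto simp: c_def e_def N_def)
  fix a :: 'a assume "a \<noteq> 0"
  have "inj_on e {..degree D}" and e_range: "e ` {..degree D} \<subseteq> {- int N..int N}"
    by (auto simp: e_def N_def inj_on_def)
  have "a ^ S * poly D (1 / a) = (\<Sum>i\<le>degree D. c (e i) * a powi (e i))"
    unfolding poly_altdef sum_distrib_left
    using \<open>a \<noteq> 0\<close> by (intro sum.cong refl)
      (simp add: c_def e_def power_int_diff power_one_over field_simps)
  also have "\<dots> = (\<Sum>k\<in>e ` {..degree D}. c k * a powi k)"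
    using sum.reindex[OF \<open>inj_on e {..degree D}\<close>, of "\<lambda>k. c k * a powi k"] by simp
  also have "\<dots> = (\<Sum>k = - int N..int N. c k * a powi k)"
  proof (rule sum.mono_neutral_left[OF _ e_range])
    show "\<forall>k\<in>{- int N..int N} - e ` {..degree D}. c k * a powi k = 0"
    proof
      fix k assume k: "k \<in> {- int N..int N} - e ` {..degree D}"
      show "c k * a powi k = 0"
      proof (cases "k \<le> int S")
        case True
        then have "k = e (nat (int S - k))"
          by (simp add: e_def)
        then have "degree D < nat (int S - k)"
          using k by (metis DiffD2 atMost_iff image_eqI not_le_imp_less)
        then show ?thesis
          by (simp add: c_def coeff_eq_0)
      qed (simp add: c_def)
    qed
  qed simp
  finally show "a ^ S * poly D (1 / a) = (\<Sum>k = - int N..int N. c k * a powi k)" .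
qed

lemma tendsto_minus_principal_part_simple_pole:
  fixes f :: "complex \<Rightarrow> complex"
  assumes "open S" "p \<in> S" "f holomorphic_on S - {p}" "is_pole f p" "zorder f p = -1"
  shows "\<exists>c. ((\<lambda>z. f z - residue f p / (z - p)) \<longlongrightarrow> c) (at p)"
proof -
  define g where "g = zor_poly f p"
  obtain r where r: "r > 0" "cball p r \<subseteq> S" "g holomorphic_on cball p r"
    "\<forall>z\<in>cball p r - {p}. f z = g z / (z - p) ^ nat (- zorder f p)"
    using zorder_exist_pole[OF assms(3,1,2,4)] unfolding g_def by blast
  have f_eq: "f z = g z / (z - p)" if "z \<in> ball p r - {p}" for z
    using r(4) that assms(5) by auto
  have "f holomorphic_on ball p r - {p}"
    using assms(3) by (rule holomorphic_on_subset) (use r(2) in auto)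
  then have "isolated_singularity_at f p"
    using r(1) by (intro isolated_singularity_at_holomorphic[of f "ball p r"]) auto
  then have res: "residue f p = g p"
    unfolding g_def using assms(4,5) by (rule residue_simple_pole)
  have "g holomorphic_on ball p r"
    using r(3) by (rule holomorphic_on_subset) auto
  then have "g field_differentiable at p"
    using r(1) by (intro holomorphic_on_imp_differentiable_at) auto
  then have "(g has_field_derivative deriv g p) (at p)"
    by (rule field_differentiable_derivI)
  then have lim: "((\<lambda>z. (g z - g p) / (z - p)) \<longlongrightarrow> deriv g p) (at p)"
    by (simp add: has_field_derivative_iff)
  have "eventually (\<lambda>z. z \<in> ball p r - {p}) (at p)"
    using r(1) by (intro eventually_at_in_open) auto
  then have "eventually (\<lambda>z. (g z - g p) / (z - p) = f z - residue f p / (z - p)) (at p)"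
    by eventually_elim (simp add: f_eq res diff_divide_distrib)
  from tendsto_cong[OF this] lim show ?thesis
    by blast
qed

lemma remove_sings_holomorphic_on:
  assumes "open S" "finite P" "f holomorphic_on S - P"
    and "\<And>p. p \<in> P \<Longrightarrow> \<exists>c. (f \<longlongrightarrow> c) (at p)"
  shows "remove_sings f holomorphic_on S"
proof -
  have "remove_sings f analytic_on {z}" if "z \<in> S" for z
  proof (cases "z \<in> P")
    case True
    have "f holomorphic_on (S - (P - {z})) - {z}"
      using assms(3) by (rule holomorphic_on_subset) auto
    moreover have "open (S - (P - {z}))"
      using assms(1,2) by (intro open_Diff finite_imp_closed) auto
    ultimately have "isolated_singularity_at f z"
      using that by (simp add: isolated_singularity_at_holomorphic)
    then show ?thesis
      using assms(4)[OF True] remove_sings_analytic_at by blast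
  next
    case False
    have "open (S - P)"
      using assms(1,2) by (intro open_Diff finite_imp_closed)
    then have "f analytic_on {z}"
      using False that by (intro holomorphic_on_imp_analytic_at[OF assms(3)]) auto
    then show ?thesis
      by (rule remove_sings_analytic_on)
  qed
  then show ?thesis
    using analytic_imp_holomorphic analytic_on_analytic_at by blast
qed

lemma simple_poles_principal_parts_removable:
  fixes f :: "complex \<Rightarrow> complex"
  assumes "open S" "finite P" "P \<subseteq> S" "f holomorphic_on S - P"
    and "\<And>p. p \<in> P \<Longrightarrow> is_pole f p \<and> zorder f p = -1"
  obtains g where "g holomorphic_on S"
    and "\<And>z. z \<in> S - P \<Longrightarrow> g z = f z - (\<Sum>p\<in>P. residue f p / (z - p))"
proof -
  define U where "U z = f z - (\<Sum>p\<in>P. residue f p / (z - p))" for z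
  have open_SP: "open (S - P)"
    using assms(1,2) by (intro open_Diff finite_imp_closed)
  have U_holo: "U holomorphic_on S - P"
    unfolding U_def using assms(4) by (intro holomorphic_intros) auto
  have "remove_sings U holomorphic_on S"
  proof (rule remove_sings_holomorphic_on[OF assms(1,2) U_holo])
    fix p assume p: "p \<in> P"
    have U_split: "U z = (f z - residue f p / (z - p)) - (\<Sum>p'\<in>P - {p}. residue f p' / (z - p'))" for z
      unfolding U_def using p assms(2) by (simp add: sum.remove)
    have "f holomorphic_on (S - (P - {p})) - {p}"
      using assms(4) by (rule holomorphic_on_subset) auto
    moreover have "open (S - (P - {p}))"
      using assms(1,2) by (intro open_Diff finite_imp_closed) auto
    ultimately obtain c where c: "((\<lambda>z. f z - residue f p / (z - p)) \<longlongrightarrow> c) (at p)"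
      using tendsto_minus_principal_part_simple_pole[of "S - (P - {p})" p f] p assms(3,5) by blast
    have "((\<lambda>z. \<Sum>p'\<in>P - {p}. residue f p' / (z - p')) \<longlongrightarrow> (\<Sum>p'\<in>P - {p}. residue f p' / (p - p'))) (at p)"
      by (intro tendsto_intros) auto
    from tendsto_diff[OF c this] show "\<exists>c. (U \<longlongrightarrow> c) (at p)"
      unfolding U_split by blast
  qed
  moreover have "remove_sings U z = U z" if "z \<in> S - P" for z
    using holomorphic_on_imp_analytic_at[OF U_holo open_SP that] by (rule remove_sings_at_analytic)
  ultimately show ?thesis
    using that unfolding U_def by blast
qed

lemma has_contour_integral_scaled_circlepath_iff:
  "(f has_contour_integral I) ((*) c \<circ> circlepath z r) \<longleftrightarrow>
   ((\<lambda>x. c * f (c * x)) has_contour_integral I) (circlepath z r)"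
proof -
  have "vector_derivative ((*) c \<circ> circlepath z r) (at x) =
        c * vector_derivative (circlepath z r) (at x)" for x
  proof -
    note D = has_vector_derivative_circlepath[of z r x UNIV]
    have "((\<lambda>x. c * circlepath z r x) has_vector_derivative
           c * vector_derivative (circlepath z r) (at x)) (at x)"
      unfolding vector_derivative_at[OF D] by (rule has_vector_derivative_mult_right[OF D])
    then show ?thesis
      by (simp add: o_def vector_derivative_at)
  qed
  then show ?thesis
    by (simp add: has_contour_integral mult_ac)
qed

lemma homotopic_loops_circlepath_scaled:
  fixes t :: complex
  assumes "0 < norm t" "norm t \<le> 1" "{z. norm t \<le> norm z \<and> norm z \<le> 1} \<subseteq> S"
  shows "homotopic_loops S (circlepath 0 1) ((*) t \<circ> circlepath 0 1)"
  unfolding homotopic_loops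
proof (intro exI conjI)
  define L where "L = Ln t"
  have exp_L: "exp L = t" and Re_L: "Re L = ln (norm t)"
    using assms(1) by (auto simp: L_def)
  define H where "H p = exp (of_real (fst p) * L) * exp (2 * of_real pi * \<i> * of_real (snd p))"
    for p :: "real \<times> real"
  show "continuous_on ({0..1} \<times> {0..1}) H"
    unfolding H_def by (intro continuous_intros)
  show "H \<in> {0..1} \<times> {0..1} \<rightarrow> S"
  proof
    fix p :: "real \<times> real" assume p: "p \<in> {0..1} \<times> {0..1}"
    have norm_H: "norm (H p) = exp (fst p * ln (norm t))"
      by (simp add: H_def norm_mult Re_L)
    have ln_t: "ln (norm t) \<le> 0"
      using assms(1,2) by simp
    have "exp (fst p * ln (norm t)) \<le> 1"
      using p ln_t by (auto intro: mult_nonneg_nonpos)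
    moreover have "ln (norm t) \<le> fst p * ln (norm t)"
      using p ln_t mult_right_mono[of "fst p" 1 "- ln (norm t)"] by auto
    then have "norm t \<le> exp (fst p * ln (norm t))"
      using assms(1) by (metis exp_le_cancel_iff exp_ln zero_less_norm_iff)
    ultimately show "H p \<in> S"
      using assms(3) norm_H by auto
  qed
  show "\<forall>x\<in>{0..1}. H (0, x) = circlepath 0 1 x"
    by (simp add: H_def circlepath)
  show "\<forall>x\<in>{0..1}. H (1, x) = ((*) t \<circ> circlepath 0 1) x"
    by (simp add: H_def circlepath exp_L)
  show "\<forall>u\<in>{0..1}. pathfinish (H \<circ> Pair u) = pathstart (H \<circ> Pair u)"
    by (simp add: H_def pathfinish_def pathstart_def)
qed

lemma valid_path_scaled_circlepath:
  "valid_path ((*) t \<circ> circlepath 0 1)"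
  "pathfinish ((*) t \<circ> circlepath 0 1) = pathstart ((*) t \<circ> circlepath 0 1)"
  "path_image ((*) t \<circ> circlepath 0 1) \<subseteq> sphere 0 (norm t)"
  by (auto simp: pathfinish_compose pathstart_compose path_image_compose norm_mult
      intro!: valid_path_compose_holomorphic[of _ _ UNIV] holomorphic_intros)

lemma contour_integral_circlepath_eq_scaled:
  fixes t :: complex
  assumes "0 < norm t" "norm t \<le> 1" "open S" "{z. norm t \<le> norm z \<and> norm z \<le> 1} \<subseteq> S"
    and "f holomorphic_on S"
  shows "contour_integral (circlepath 0 1) f = contour_integral ((*) t \<circ> circlepath 0 1) f"
  using homotopic_loops_circlepath_scaled[OF assms(1,2,4)] assms(3,5)
  by (intro Cauchy_theorem_homotopic[of False S]) (simp_all add: valid_path_scaled_circlepath)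

lemma has_contour_integral_scaled_circlepath_periodic:
  assumes "\<And>z. norm z = 1 \<Longrightarrow> w (t * z) = w z"
    and "((\<lambda>z. w z * z ^ n) has_contour_integral I) (circlepath 0 1)"
  shows "((\<lambda>z. w z * z ^ n) has_contour_integral t ^ (n + 1) * I) ((*) t \<circ> circlepath 0 1)"
  unfolding has_contour_integral_scaled_circlepath_iff
proof (rule has_contour_integral_eq[OF has_contour_integral_lmul[OF assms(2)]])
  fix z :: complex assume "z \<in> path_image (circlepath 0 1)"
  then show "t ^ (n + 1) * (w z * z ^ n) = t * (w (t * z) * (t * z) ^ n)"
    by (simp add: assms(1) power_mult_distrib)
qed

lemma has_contour_integral_principal_parts_circlepath:
  assumes "finite P" "P \<subseteq> ball 0 1"
  shows "((\<lambda>z. \<Sum>p\<in>P. \<rho> p * z ^ n / (z - p)) has_contour_integral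
          2 * of_real pi * \<i> * (\<Sum>p\<in>P. \<rho> p * p ^ n)) (circlepath 0 1)"
  unfolding sum_distrib_left
proof (intro has_contour_integral_sum assms(1))
  fix p assume "p \<in> P"
  then have "norm (p - 0) < 1"
    using assms(2) by auto
  then show "((\<lambda>z. \<rho> p * z ^ n / (z - p)) has_contour_integral
              2 * of_real pi * \<i> * (\<rho> p * p ^ n)) (circlepath 0 1)"
    by (intro Cauchy_integral_circlepath_simple holomorphic_intros)
qed

lemma has_contour_integral_principal_parts_scaled_circlepath:
  assumes "finite P" "\<And>p. p \<in> P \<Longrightarrow> norm t < norm p"
  shows "((\<lambda>z. \<Sum>p\<in>P. \<rho> p * z ^ n / (z - p)) has_contour_integral 0) ((*) t \<circ> circlepath 0 1)"
proof (intro has_contour_integral_sum[where i="\<lambda>_. 0", simplified] assms(1))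
  fix p assume "p \<in> P"
  then have "path_image ((*) t \<circ> circlepath 0 1) \<subseteq> ball 0 (norm p)"
    using assms(2) valid_path_scaled_circlepath(3)[of t] by fastforce
  then show "((\<lambda>z. \<rho> p * z ^ n / (z - p)) has_contour_integral 0) ((*) t \<circ> circlepath 0 1)"
    by (intro Cauchy_theorem_convex_simple[of _ "ball 0 (norm p)"] holomorphic_intros)
      (auto simp: valid_path_scaled_circlepath)
qed

lemma has_contour_integral_circlepath_periodic:
  fixes w :: "complex \<Rightarrow> complex" and t :: complex
  assumes t: "0 < norm t" "norm t < 1"
    and S: "open S" "{z. norm t \<le> norm z \<and> norm z \<le> 1} \<subseteq> S"
    and P: "finite P" "P \<subseteq> {z. norm t < norm z \<and> norm z < 1}"
    and holo: "w holomorphic_on S - P"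
    and poles: "\<And>p. p \<in> P \<Longrightarrow> is_pole w p \<and> zorder w p = -1"
    and periodic: "\<And>z. norm z = 1 \<Longrightarrow> w (t * z) = w z"
  shows "((\<lambda>z. w z * z ^ n) has_contour_integral
           2 * of_real pi * \<i> * (\<Sum>p\<in>P. residue w p * p ^ n) / (1 - t ^ (n + 1))) (circlepath 0 1)"
proof -
  let ?\<gamma> = "circlepath (0::complex) 1" and ?h = "(*) t \<circ> circlepath 0 1"
  let ?X = "2 * of_real pi * \<i> * (\<Sum>p\<in>P. residue w p * p ^ n)"
  have "P \<subseteq> S"
    using P(2) S(2) by force
  then obtain g where g: "g holomorphic_on S"
    "\<And>z. z \<in> S - P \<Longrightarrow> g z = w z - (\<Sum>p\<in>P. residue w p / (z - p))"
    using simple_poles_principal_parts_removable[OF S(1) P(1) _ holo] poles by blast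
  have "sphere 0 1 \<union> sphere 0 (norm t) \<subseteq> S - P"
    using S(2) P(2) t by auto
  then have circles: "path_image ?\<gamma> \<subseteq> S - P" "path_image ?h \<subseteq> S - P"
    using valid_path_scaled_circlepath(3)[of t] by auto
  have regular_part: "g z * z ^ n = w z * z ^ n - (\<Sum>p\<in>P. residue w p * z ^ n / (z - p))"
    if "z \<in> S - P" for z
    using that by (simp add: g(2) sum_distrib_right left_diff_distrib)
  have "open (S - P)"
    using S(1) P(1) by (intro open_Diff finite_imp_closed)
  then have "(\<lambda>z. w z * z ^ n) contour_integrable_on ?\<gamma>"
    using holo circles(1) by (intro contour_integrable_holomorphic_simple[of _ "S - P"] holomorphic_intros) auto
  then obtain I where I: "((\<lambda>z. w z * z ^ n) has_contour_integral I) ?\<gamma>"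
    by (auto simp: contour_integrable_on_def)
  have P_inside: "P \<subseteq> ball 0 1" and P_outside: "\<And>p. p \<in> P \<Longrightarrow> norm t < norm p"
    using P(2) by auto
  have "((\<lambda>z. g z * z ^ n) has_contour_integral I - ?X) ?\<gamma>"
    using has_contour_integral_diff[OF I has_contour_integral_principal_parts_circlepath[OF P(1) P_inside]]
    by (rule has_contour_integral_eq) (use circles(1) regular_part in auto)
  moreover have "((\<lambda>z. g z * z ^ n) has_contour_integral t ^ (n + 1) * I - 0) ?h"
    using has_contour_integral_diff[OF has_contour_integral_scaled_circlepath_periodic[OF periodic I]
        has_contour_integral_principal_parts_scaled_circlepath[OF P(1) P_outside]]
    by (rule has_contour_integral_eq) (use circles(2) regular_part in auto)
  moreover have "contour_integral ?\<gamma> (\<lambda>z. g z * z ^ n) = contour_integral ?h (\<lambda>z. g z * z ^ n)"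
    using t S g(1) by (intro contour_integral_circlepath_eq_scaled holomorphic_intros) auto
  ultimately have "I - ?X = t ^ (n + 1) * I"
    by (metis contour_integral_unique diff_zero)
  moreover have "I * (1 - T) = X" if "I - X = T * I" for X T :: complex
    using that by (simp add: algebra_simps)
  moreover have "norm (t ^ (n + 1)) < 1"
    unfolding norm_power Suc_eq_plus1[symmetric] using t by (rule power_Suc_less_one)
  then have "1 - t ^ (n + 1) \<noteq> 0"
    by auto
  ultimately have "I = ?X / (1 - t ^ (n + 1))"
    by (simp add: eq_divide_eq)
  with I show ?thesis
    by simp
qed

lemma power_int_mult_in_annulus_imp_zero:
  fixes s x m M :: real and k :: int
  assumes s: "0 < s" "s < 1" and x: "0 < m" "m \<le> x" "x \<le> M"
    and lower: "s * M < s powi k * x" and upper: "s powi k * x < m / s"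
  shows "k = 0"
proof (rule ccontr)
  assume "k \<noteq> 0"
  then consider "1 \<le> k" | "k \<le> -1"
    by linarith
  then show False
  proof cases
    case 1
    then have "s powi k \<le> s"
      using power_int_decreasing[of 1 k s] s by simp
    then have "s powi k * x \<le> s * M"
      using s x by (intro mult_mono) auto
    with lower show False
      by simp
  next
    case 2
    then have "inverse s \<le> s powi k"
      using power_int_decreasing[of k "-1" s] s by (simp add: power_int_minus)
    then have "inverse s * m \<le> s powi k * x"
      using s x by (intro mult_mono) auto
    with upper show False
      by (simp add: field_simps)
  qed
qed

definition w_moment :: "complex \<Rightarrow> complex \<Rightarrow> nat \<Rightarrow> complex" where
  "w_moment t a n = 2 * of_real pi * \<i> * (a ^ (n + 1) - (t / a) ^ (n + 1)) / (1 - t ^ (n + 1))"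

lemma norm_reflected_point_bounds:
  fixes q a :: complex
  assumes "0 < norm q" "(norm q)\<^sup>2 < norm a" "norm a < 1"
  shows "(norm q)\<^sup>2 < norm (q\<^sup>2 / a)" "norm (q\<^sup>2 / a) < 1"
proof -
  have "0 < norm a"
    using assms(1,2) by (smt (verit) zero_less_power)
  moreover have "(norm q)\<^sup>2 * norm a < (norm q)\<^sup>2"
    using assms(1,3) by simp
  ultimately show "(norm q)\<^sup>2 < norm (q\<^sup>2 / a)" "norm (q\<^sup>2 / a) < 1"
    using assms(2) by (simp_all add: norm_divide norm_power field_simps)
qed

lemma w_spec_simple_poles:
  assumes "w_spec q a w"
  shows "is_pole w a" "zorder w a = -1" "residue w a = a"
    and "is_pole w (q\<^sup>2 / a)" "zorder w (q\<^sup>2 / a) = -1" "residue w (q\<^sup>2 / a) = - (q\<^sup>2 / a)"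
proof -
  have "\<forall>k::int. is_pole w (q powi (2*k) * a) \<and> zorder w (q powi (2*k) * a) = -1 \<and>
                 residue w (q powi (2*k) * a) = q powi (2*k) * a"
    "\<forall>k::int. is_pole w (q powi (2*k) * (q\<^sup>2 / a)) \<and> zorder w (q powi (2*k) * (q\<^sup>2 / a)) = -1 \<and>
                 residue w (q powi (2*k) * (q\<^sup>2 / a)) = - (q powi (2*k) * (q\<^sup>2 / a))"
    using assms unfolding w_spec_def Let_def by blast+
  from this(1)[rule_format, of 0] this(2)[rule_format, of 0]
  show "is_pole w a" "zorder w a = -1" "residue w a = a"
    and "is_pole w (q\<^sup>2 / a)" "zorder w (q\<^sup>2 / a) = -1" "residue w (q\<^sup>2 / a) = - (q\<^sup>2 / a)"
    by simp_all
qed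

lemma annulus_avoiding_pole_lattices:
  fixes q a :: complex
  assumes q: "0 < norm q" "norm q < 1" and a: "(norm q)\<^sup>2 < norm a" "norm a < 1"
  obtains S where "open S" "{z. (norm q)\<^sup>2 \<le> norm z \<and> norm z \<le> 1} \<subseteq> S" "0 \<notin> S"
    "\<And>c k. c \<in> {a, q\<^sup>2 / a} \<Longrightarrow> q powi (2*k) * c \<in> S \<Longrightarrow> k = 0"
proof -
  define s where "s = (norm q)\<^sup>2"
  define M where "M = max (norm a) (norm (q\<^sup>2 / a))"
  define m where "m = min (norm a) (norm (q\<^sup>2 / a))"
  define S where "S = ball 0 (m / s) - cball (0::complex) (s * M)"
  have s: "0 < s" "s < 1"
    using q by (simp_all add: s_def power_less_one_iff)
  have m: "s < m" and M: "M < 1" "norm a \<le> M"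
    using a s norm_reflected_point_bounds[OF q(1) a] by (auto simp: m_def M_def s_def)
  have "0 < s * M"
    using s(1) M(2) a(1) unfolding s_def by (intro mult_pos_pos) linarith+
  have S_bounds: "s * M < s" "1 < m / s"
    using s m M by (simp_all add: less_divide_eq_1_pos)
  have in_S: "z \<in> S \<longleftrightarrow> s * M < norm z \<and> norm z < m / s" for z
    by (auto simp: S_def)
  show ?thesis
  proof
    show "open S"
      by (simp add: S_def open_Diff)
    show "{z. (norm q)\<^sup>2 \<le> norm z \<and> norm z \<le> 1} \<subseteq> S"
      using S_bounds by (auto simp: in_S s_def)
    show "0 \<notin> S"
      using \<open>0 < s * M\<close> by (simp add: in_S)
    fix c k assume c: "c \<in> {a, q\<^sup>2 / a}" and "q powi (2*k) * c \<in> S"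
    moreover have "norm (q powi (2*k) * c) = s powi k * norm c"
      by (simp add: s_def norm_mult norm_power_int power_int_mult norm_power)
    ultimately have "s * M < s powi k * norm c" "s powi k * norm c < m / s"
      by (auto simp: in_S)
    moreover have "0 < m" "m \<le> norm c" "norm c \<le> M"
      using c m s by (auto simp: m_def M_def)
    ultimately show "k = 0"
      using power_int_mult_in_annulus_imp_zero[OF s] by blast
  qed
qed

lemma w_spec_annulus:
  fixes q a :: complex and w :: "complex \<Rightarrow> complex"
  assumes q: "0 < norm q" "norm q < 1" and a: "(norm q)\<^sup>2 < norm a" "norm a < 1"
    and w: "w_spec q a w"
  obtains S where "open S" "{z. (norm q)\<^sup>2 \<le> norm z \<and> norm z \<le> 1} \<subseteq> S"
    "w holomorphic_on S - {a, q\<^sup>2 / a}" "\<And>z. norm z = 1 \<Longrightarrow> w (q\<^sup>2 * z) = w z"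
proof -
  obtain S where S: "open S" "{z. (norm q)\<^sup>2 \<le> norm z \<and> norm z \<le> 1} \<subseteq> S" "0 \<notin> S"
    and lattice: "\<And>c k. c \<in> {a, q\<^sup>2 / a} \<Longrightarrow> q powi (2*k) * c \<in> S \<Longrightarrow> k = 0"
    using annulus_avoiding_pole_lattices[OF q a] by blast
  define PA where "PA = {q powi (2*k) * a | k::int. True}"
  define PB where "PB = {q powi (2*k) * (q\<^sup>2 / a) | k::int. True}"
  have W: "w holomorphic_on (- {0} - (PA \<union> PB))" "\<forall>x \<in> - {0} - (PA \<union> PB). w (q\<^sup>2 * x) = w x"
    using w unfolding w_spec_def Let_def PA_def PB_def by blast+
  have "z \<in> {a, q\<^sup>2 / a}" if "z \<in> S" "z \<in> PA \<union> PB" for z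
  proof -
    obtain c k where "c \<in> {a, q\<^sup>2 / a}" "z = q powi (2*k) * c"
      using \<open>z \<in> PA \<union> PB\<close> unfolding PA_def PB_def by blast
    with lattice[of c k] \<open>z \<in> S\<close> show ?thesis
      by auto
  qed
  with S(3) have domain: "S - {a, q\<^sup>2 / a} \<subseteq> - {0} - (PA \<union> PB)"
    by blast
  have "(norm q)\<^sup>2 \<le> 1"
    using q by (simp add: power_le_one)
  then have "sphere 0 1 \<subseteq> S - {a, q\<^sup>2 / a}"
    using S(2) a(2) norm_reflected_point_bounds[OF q(1) a] by auto
  show ?thesis
  proof
    show "w holomorphic_on S - {a, q\<^sup>2 / a}"
      using W(1) domain by (rule holomorphic_on_subset)
    show "w (q\<^sup>2 * z) = w z" if "norm z = 1" for z
    proof -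
      have "z \<in> - {0} - (PA \<union> PB)"
        using that domain \<open>sphere 0 1 \<subseteq> _\<close> by auto
      then show ?thesis
        using W(2) by blast
    qed
  qed (use S in auto)
qed

lemma has_contour_integral_w_power:
  fixes q a :: complex and w :: "complex \<Rightarrow> complex"
  assumes q: "0 < norm q" "norm q < 1" and a: "(norm q)\<^sup>2 < norm a" "norm a < 1" "a\<^sup>2 \<noteq> q\<^sup>2"
    and w: "w_spec q a w"
  shows "((\<lambda>z. w z * z ^ n) has_contour_integral w_moment (q\<^sup>2) a n) (circlepath 0 1)"
proof -
  obtain S where S: "open S" "{z. (norm q)\<^sup>2 \<le> norm z \<and> norm z \<le> 1} \<subseteq> S"
    "w holomorphic_on S - {a, q\<^sup>2 / a}" "\<And>z. norm z = 1 \<Longrightarrow> w (q\<^sup>2 * z) = w z"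
    using w_spec_annulus[OF q a(1,2) w] by blast
  have "a \<noteq> 0"
    using a(1) q(1) by auto
  then have "a \<noteq> q\<^sup>2 / a"
    using a(3) by (auto simp: field_simps power2_eq_square)
  have "((\<lambda>z. w z * z ^ n) has_contour_integral
          2 * of_real pi * \<i> * (\<Sum>p\<in>{a, q\<^sup>2 / a}. residue w p * p ^ n) / (1 - (q\<^sup>2) ^ (n + 1)))
          (circlepath 0 1)"
  proof (rule has_contour_integral_circlepath_periodic)
    show "0 < norm (q\<^sup>2)" "norm (q\<^sup>2) < 1"
      using q by (simp_all add: norm_power power_less_one_iff)
    show "{z. norm (q\<^sup>2) \<le> norm z \<and> norm z \<le> 1} \<subseteq> S"
      using S(2) by (simp add: norm_power)
    show "{a, q\<^sup>2 / a} \<subseteq> {z. norm (q\<^sup>2) < norm z \<and> norm z < 1}"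
      using a(1,2) norm_reflected_point_bounds[OF q(1) a(1,2)] by (simp add: norm_power)
    show "is_pole w p \<and> zorder w p = -1" if "p \<in> {a, q\<^sup>2 / a}" for p
      using that w_spec_simple_poles[OF w] by auto
  qed (use S in auto)
  moreover have "(\<Sum>p\<in>{a, q\<^sup>2 / a}. residue w p * p ^ n) = a ^ (n + 1) - (q\<^sup>2 / a) ^ (n + 1)"
    using \<open>a \<noteq> q\<^sup>2 / a\<close> w_spec_simple_poles[OF w] by simp
  ultimately show ?thesis
    by (simp add: w_moment_def)
qed

lemma contour_integral_poly_w_power:
  fixes q a :: complex and w :: "complex \<Rightarrow> complex"
  assumes "0 < norm q" "norm q < 1" "(norm q)\<^sup>2 < norm a" "norm a < 1" "a\<^sup>2 \<noteq> q\<^sup>2"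
    and "w_spec q a w"
  shows "contour_integral (circlepath 0 1) (\<lambda>z. poly R z * w z * z ^ k) =
         (\<Sum>l\<le>degree R. coeff R l * w_moment (q\<^sup>2) a (k + l))"
proof -
  have "(\<lambda>z. poly R z * w z * z ^ k) = (\<lambda>z. \<Sum>l\<le>degree R. coeff R l * (w z * z ^ (k + l)))"
    by (simp add: poly_altdef sum_distrib_left sum_distrib_right power_add mult_ac)
  moreover have "((\<lambda>z. \<Sum>l\<le>degree R. coeff R l * (w z * z ^ (k + l))) has_contour_integral
                  (\<Sum>l\<le>degree R. coeff R l * w_moment (q\<^sup>2) a (k + l))) (circlepath 0 1)"
    by (intro has_contour_integral_sum has_contour_integral_lmul has_contour_integral_w_power assms) auto
  ultimately show ?thesis
    by (simp add: contour_integral_unique)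
qed

text \<open>The sum of \<open>coeff R l * w_moment t a (k + l)\<close> over l, divided by \<open>a ^ (k + degree R + 1)\<close>,
  as a polynomial in \<open>1 / a\<close>.\<close>
definition moment_poly :: "complex \<Rightarrow> complex poly \<Rightarrow> nat \<Rightarrow> complex poly" where
  "moment_poly t R k = (\<Sum>l\<le>degree R.
     Polynomial.smult (coeff R l * 2 * of_real pi * \<i> / (1 - t ^ (k + l + 1)))
       (monom 1 (degree R - l) - monom (t ^ (k + l + 1)) (2 * (k + l + 1) + (degree R - l))))"

lemma sum_w_moment_eq_moment_poly:
  assumes "a \<noteq> 0"
  shows "(\<Sum>l\<le>degree R. coeff R l * w_moment t a (k + l)) =
         a ^ (k + degree R + 1) * poly (moment_poly t R k) (1 / a)"
  unfolding moment_poly_def poly_sum sum_distrib_left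
proof (intro sum.cong refl)
  fix l assume "l \<in> {..degree R}"
  then obtain j where j: "degree R = l + j"
    using le_Suc_ex by auto
  define e where "e = k + l + 1"
  define c where "c = coeff R l * 2 * of_real pi * \<i> / (1 - t ^ e)"
  have powers: "a ^ (k + degree R + 1) * (1 / a) ^ (degree R - l) = a ^ e"
    "a ^ (k + degree R + 1) * (1 / a) ^ (2 * e + (degree R - l)) = 1 / a ^ e"
    using assms by (simp_all add: j e_def power_add power_mult power2_eq_square power_one_over field_simps)
  have "coeff R l * w_moment t a (k + l) = c * (a ^ e - t ^ e / a ^ e)"
    unfolding w_moment_def e_def[symmetric] by (simp add: c_def power_divide mult_ac)
  also have "\<dots> = c * (a ^ (k + degree R + 1) * (1 / a) ^ (degree R - l) -
                      t ^ e * (a ^ (k + degree R + 1) * (1 / a) ^ (2 * e + (degree R - l))))"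
    unfolding powers by simp
  also have "\<dots> = a ^ (k + degree R + 1) *
      poly (Polynomial.smult c (monom 1 (degree R - l) - monom (t ^ e) (2 * e + (degree R - l)))) (1 / a)"
    by (simp add: poly_monom algebra_simps)
  finally show "coeff R l * w_moment t a (k + l) =
    a ^ (k + degree R + 1) * poly (Polynomial.smult (coeff R l * 2 * of_real pi * \<i> / (1 - t ^ (k + l + 1)))
      (monom 1 (degree R - l) - monom (t ^ (k + l + 1)) (2 * (k + l + 1) + (degree R - l)))) (1 / a)"
    by (simp only: c_def e_def)
qed

lemma poly_moment_poly_0:
  "poly (moment_poly t R k) 0 = coeff R (degree R) * 2 * of_real pi * \<i> / (1 - t ^ (k + degree R + 1))"
proof -
  have "poly (moment_poly t R k) 0 =
        (\<Sum>l\<le>degree R. if l = degree R then coeff R l * 2 * of_real pi * \<i> / (1 - t ^ (k + l + 1)) else 0)"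
    unfolding moment_poly_def poly_sum by (intro sum.cong refl) (auto simp: poly_monom)
  then show ?thesis
    by simp
qed

lemma det_moment_matrix:
  fixes q a :: complex and w :: "complex \<Rightarrow> complex"
  assumes "0 < norm q" "norm q < 1" "(norm q)\<^sup>2 < norm a" "norm a < 1" "a\<^sup>2 \<noteq> q\<^sup>2"
    and "w_spec q a w"
  shows "det (moment_matrix R w m) =
         a ^ (\<Sum>i<Suc m. 2 * i + degree R + 1) *
         poly (det (mat (Suc m) (Suc m) (\<lambda>(i, j). moment_poly (q\<^sup>2) R (i + j)))) (1 / a)"
proof -
  let ?P = "mat (Suc m) (Suc m) (\<lambda>(i, j). moment_poly (q\<^sup>2) R (i + j))"
  have "a \<noteq> 0"
    using assms(1,3) by auto
  have entry: "contour_integral (circlepath 0 1) (\<lambda>z. poly R z * w z * z ^ (i + j)) =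
      a ^ i * a ^ (j + degree R + 1) * poly (moment_poly (q\<^sup>2) R (i + j)) (1 / a)" for i j
    unfolding contour_integral_poly_w_power[OF assms] sum_w_moment_eq_moment_poly[OF \<open>a \<noteq> 0\<close>]
    by (simp add: power_add mult_ac)
  have "moment_matrix R w m = mat (Suc m) (Suc m)
          (\<lambda>(i, j). a ^ i * a ^ (j + degree R + 1) * poly (moment_poly (q\<^sup>2) R (i + j)) (1 / a))"
    unfolding moment_matrix_def by (intro cong_mat refl) (simp add: entry)
  moreover have "map_mat (\<lambda>p. poly p (1 / a)) ?P =
      mat (Suc m) (Suc m) (\<lambda>(i, j). poly (moment_poly (q\<^sup>2) R (i + j)) (1 / a))"
    by (rule eq_matI) auto
  ultimately have "det (moment_matrix R w m) =
             (\<Prod>i<Suc m. a ^ i * a ^ (i + degree R + 1)) * det (map_mat (\<lambda>p. poly p (1 / a)) ?P)"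
    by (simp only: det_mat_mult_row_col)
  also have "(\<Prod>i<Suc m. a ^ i * a ^ (i + degree R + 1)) = a ^ (\<Sum>i<Suc m. 2 * i + degree R + 1)"
    unfolding power_sum by (intro prod.cong refl) (simp add: power_add[symmetric] mult_2 add.assoc)
  finally show ?thesis
    by (simp only: det_map_mat_poly)
qed

lemma det_moment_poly_matrix_nonzero:
  assumes "0 < norm t" "norm t < 1" "R \<noteq> 0"
  shows "det (mat n n (\<lambda>(i, j). moment_poly t R (i + j))) \<noteq> 0"
proof -
  define K where "K = coeff R (degree R) * 2 * of_real pi * \<i>"
  have "K \<noteq> 0"
    using assms(3) by (simp add: K_def)
  have "poly (det (mat n n (\<lambda>(i, j). moment_poly t R (i + j)))) 0 =
        det (mat n n (\<lambda>(i, j). K * 1 * (1 / (1 - t ^ i * t ^ (j + degree R + 1)))))"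
    unfolding det_map_mat_poly[symmetric]
    by (intro arg_cong[where f=det] eq_matI)
      (simp_all add: poly_moment_poly_0 K_def power_add[symmetric] add_ac)
  also have "\<dots> = (\<Prod>i<n. K * 1) * det (mat n n (\<lambda>(i, j). 1 / (1 - t ^ i * t ^ (j + degree R + 1))))"
    by (rule det_mat_mult_row_col)
  also have "\<dots> \<noteq> 0"
  proof -
    have inj: "inj (\<lambda>k::nat. t ^ k)"
      using assms(1,2) by (intro injI) (metis norm_power power_inject_exp' less_irrefl zero_less_norm_iff)
    have "norm (t ^ i * t ^ (j + degree R + 1)) < 1" for i j
      unfolding power_add[symmetric] norm_power Suc_eq_plus1[symmetric] add_Suc_right
      using assms(1,2) by (rule power_Suc_less_one)
    then have "t ^ i * t ^ (j + degree R + 1) \<noteq> 1" for i j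
      by (metis less_irrefl norm_one)
    moreover have "inj_on (\<lambda>j. t ^ (j + degree R + 1)) {..<n}"
      by (intro inj_onI) (metis inj injD add_right_cancel)
    ultimately have "det (mat n n (\<lambda>(i, j). 1 / (1 - t ^ i * t ^ (j + degree R + 1)))) \<noteq> 0"
      using assms(1) inj by (intro det_cauchy_matrix_nonzero) (auto intro: inj_on_subset)
    then show ?thesis
      using \<open>K \<noteq> 0\<close> by simp
  qed
  finally show ?thesis
    by auto
qed

theorem proposition5p11:
  fixes q :: complex and R :: "complex poly" and m :: nat
    and w :: "complex \<Rightarrow> complex \<Rightarrow> complex"
  assumes "0 < norm q" and "norm q < 1" and "R \<noteq> 0"
    and "\<And>a. (norm q)\<^sup>2 < norm a \<Longrightarrow> norm a < 1 \<Longrightarrow> a\<^sup>2 \<noteq> q\<^sup>2 \<Longrightarrow> w_spec q a (w a)"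
  shows "\<exists>N::nat. \<exists>c::int \<Rightarrow> complex.
           (\<exists>k \<in> {- int N..int N}. c k \<noteq> 0) \<and>
           (\<forall>a. (norm q)\<^sup>2 < norm a \<and> norm a < 1 \<and> a\<^sup>2 \<noteq> q\<^sup>2 \<longrightarrow>
                 det (moment_matrix R (w a) m) = (\<Sum>k = - int N..int N. c k * a powi k))"
proof -
  define D where "D = det (mat (Suc m) (Suc m) (\<lambda>(i, j). moment_poly (q\<^sup>2) R (i + j)))"
  define S where "S = (\<Sum>i<Suc m. 2 * i + degree R + 1)"
  have "D \<noteq> 0"
    unfolding D_def using assms(1-3)
    by (intro det_moment_poly_matrix_nonzero) (simp_all add: norm_power power_less_one_iff)
  then obtain N c where c: "\<exists>k\<in>{- int N..int N}. c k \<noteq> 0"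
    and D_laurent: "\<And>a. a \<noteq> 0 \<Longrightarrow> a ^ S * poly D (1 / a) = (\<Sum>k = - int N..int N. c k * a powi k)"
    using power_mult_poly_inverse_laurent[of D S] by blast
  have "det (moment_matrix R (w a) m) = (\<Sum>k = - int N..int N. c k * a powi k)"
    if "(norm q)\<^sup>2 < norm a" "norm a < 1" "a\<^sup>2 \<noteq> q\<^sup>2" for a
  proof -
    have "a \<noteq> 0"
      using that(1) by auto
    with that show ?thesis
      using det_moment_matrix[OF assms(1,2) that assms(4)[OF that]] D_laurent
      by (simp add: D_def S_def)
  qed
  with c show ?thesis
    by blast
qed

end
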